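(* Let $Z$ be a Hilbert space and $\alpha>0$. Then the interior of $\mathcal L_{\mathrm{sa},\alpha}(Z,Z^* )$, taken in the Banach space $\mathcal L_{\mathrm{sa}}(Z,Z^* )$ equipped with the operator norm, is $$\big(\mathcal L_{\mathrm{sa},\alpha}(Z,Z^* )\big)^\circ=\bigcup_{\epsilon>0}\mathcal L_{\mathrm{sa},\alpha+\epsilon}(Z,Z^* ).$$
   Context: For a Hilbert space $Z$, identify $Z^{**}$ with $Z$ and set $\mathcal L_{\mathrm{sa}}(Z,Z^* )=\{G\in\mathcal L(Z,Z^* ): G^*=G\}$; this is a closed subspace of $\mathcal L(Z,Z^* )$, hence a Banach space with the operator norm. For $\alpha>0$ let $\mathcal L_{\mathrm{sa},\alpha}(Z,Z^* )=\{G\in\mathcal L_{\mathrm{sa}}(Z,Z^* ): \langle Gz,z\rangle\ge\alpha\|z\|_Z^2 \text{ for all } z\in Z\}$, where $\langle\cdot,\cdot\rangle$ is the duality pairing between $Z^*$ and $Z$. *)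

theory Defs
  imports "HOL-Analysis.Analysis"
begin

(* Z* = bounded linear functionals 'a =>L real; L(Z,Z* ) = 'a =>L ('a =>L real)
  with the operator norm.  With Z** identified with Z, the adjoint G* satisfies
  (G* z) w = (G w) z, so G* = G means (G z) w = (G w) z for all z, w. *)

definition Lsa :: "('a::real_normed_vector \<Rightarrow>\<^sub>L ('a \<Rightarrow>\<^sub>L real)) set" where
  "Lsa = {G. \<forall>z w. blinfun_apply (blinfun_apply G z) w = blinfun_apply (blinfun_apply G w) z}"

definition Lsa_coercive :: "real \<Rightarrow> ('a::real_normed_vector \<Rightarrow>\<^sub>L ('a \<Rightarrow>\<^sub>L real)) set" where
  "Lsa_coercive \<alpha> = {G \<in> Lsa. \<forall>z. blinfun_apply (blinfun_apply G z) z \<ge> \<alpha> * (norm z)^2}"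

end

theory Submission
  imports Defs
begin

text \<open>Both inclusions rest on the estimate
  \<open>\<bar>\<langle>H z, z\<rangle> - \<langle>G z, z\<rangle>\<bar> \<le> \<parallel>H - G\<parallel> \<parallel>z\<parallel>\<^sup>2\<close>:
  the self-adjoint operators within distance \<open>\<epsilon>\<close> of an \<open>(\<alpha> + \<epsilon>)\<close>-coercive \<open>G\<close> are
  \<open>\<alpha>\<close>-coercive. Conversely, if the self-adjoint operators within distance \<open>r\<close> of \<open>G\<close>
  are \<open>\<alpha>\<close>-coercive, then so is \<open>G - (r/2) J\<close>, where \<open>J\<close> is the Riesz map, with
  \<open>\<langle>J z, z\<rangle> = \<parallel>z\<parallel>\<^sup>2\<close> and \<open>\<parallel>J\<parallel> \<le> 1\<close>; hence \<open>G\<close> is \<open>(\<alpha> + r/2)\<close>-coercive.\<close>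

definition riesz_map :: "'a::real_inner \<Rightarrow>\<^sub>L ('a \<Rightarrow>\<^sub>L real)" where
  "riesz_map = Blinfun blinfun_inner_left"

lemma riesz_map_apply [simp]: "blinfun_apply (blinfun_apply riesz_map z) w = w \<bullet> z"
  by (simp add: riesz_map_def bounded_linear_Blinfun_apply[OF bounded_linear_blinfun_inner_left])

lemma norm_riesz_map_le: "norm (riesz_map :: 'a::real_inner \<Rightarrow>\<^sub>L ('a \<Rightarrow>\<^sub>L real)) \<le> 1"
proof (rule norm_blinfun_bound)
  fix z :: 'a
  show "norm (blinfun_apply riesz_map z) \<le> 1 * norm z"
    by (rule norm_blinfun_bound) (auto simp: Cauchy_Schwarz_ineq2 mult.commute)
qed simp

lemma riesz_map_in_Lsa: "riesz_map \<in> Lsa"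
  by (simp add: Lsa_def inner_commute)

lemma subspace_Lsa: "subspace Lsa"
  by (auto simp: subspace_def Lsa_def blinfun.bilinear_simps)

lemma abs_quadratic_form_diff_le:
  fixes G H :: "'a::real_normed_vector \<Rightarrow>\<^sub>L ('a \<Rightarrow>\<^sub>L real)"
  shows "\<bar>blinfun_apply (blinfun_apply H z) z - blinfun_apply (blinfun_apply G z) z\<bar>
           \<le> norm (H - G) * (norm z)\<^sup>2"
proof -
  have "\<bar>blinfun_apply (blinfun_apply H z) z - blinfun_apply (blinfun_apply G z) z\<bar>
      = norm (blinfun_apply (blinfun_apply (H - G) z) z)"
    by (simp add: blinfun.diff_left)
  also have "\<dots> \<le> norm (blinfun_apply (H - G) z) * norm z"
    by (rule norm_blinfun)
  also have "\<dots> \<le> norm (H - G) * norm z * norm z"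
    by (rule mult_right_mono[OF norm_blinfun]) simp
  finally show ?thesis
    by (simp add: power2_eq_square mult.assoc)
qed

lemma diff_scaleR_riesz_map_in_Lsa: "G \<in> Lsa \<Longrightarrow> G - c *\<^sub>R riesz_map \<in> Lsa"
  by (intro subspace_diff subspace_scale subspace_Lsa riesz_map_in_Lsa)

lemma diff_riesz_map_in_Lsa_coercive_iff:
  assumes "G \<in> Lsa"
  shows "G - c *\<^sub>R riesz_map \<in> Lsa_coercive \<alpha> \<longleftrightarrow> G \<in> Lsa_coercive (\<alpha> + c)"
proof -
  have "G - c *\<^sub>R riesz_map \<in> Lsa"
    using assms by (rule diff_scaleR_riesz_map_in_Lsa)
  then show ?thesis
    using assms
    by (auto simp: Lsa_coercive_def blinfun.diff_left blinfun.scaleR_left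
        power2_norm_eq_inner algebra_simps)
qed

lemma Lsa_Int_ball_subset_Lsa_coercive:
  assumes "G \<in> Lsa_coercive (\<alpha> + \<epsilon>)"
  shows "Lsa \<inter> ball G \<epsilon> \<subseteq> Lsa_coercive \<alpha>"
proof
  fix H
  assume H: "H \<in> Lsa \<inter> ball G \<epsilon>"
  have "\<alpha> * (norm z)\<^sup>2 \<le> blinfun_apply (blinfun_apply H z) z" for z
  proof -
    have "(\<alpha> + \<epsilon>) * (norm z)\<^sup>2 \<le> blinfun_apply (blinfun_apply G z) z"
      using assms by (simp add: Lsa_coercive_def)
    moreover have "norm (H - G) * (norm z)\<^sup>2 \<le> \<epsilon> * (norm z)\<^sup>2"
      using H by (intro mult_right_mono) (auto simp: dist_norm norm_minus_commute)
    ultimately show ?thesis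
      using abs_quadratic_form_diff_le[of H z G] by (simp add: algebra_simps abs_le_iff)
  qed
  then show "H \<in> Lsa_coercive \<alpha>"
    using H by (simp add: Lsa_coercive_def)
qed

lemma Lsa_coercive_subset_interior_of:
  assumes "\<epsilon> > 0"
  shows "Lsa_coercive (\<alpha> + \<epsilon>) \<subseteq> top_of_set Lsa interior_of Lsa_coercive \<alpha>"
proof
  fix G
  assume G: "G \<in> Lsa_coercive (\<alpha> + \<epsilon>)"
  then have "G \<in> Lsa \<inter> ball G \<epsilon>"
    using assms by (simp add: Lsa_coercive_def)
  moreover have "Lsa \<inter> ball G \<epsilon> \<subseteq> top_of_set Lsa interior_of Lsa_coercive \<alpha>"
    using Lsa_Int_ball_subset_Lsa_coercive[OF G] by (intro interior_of_maximal) auto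
  ultimately show "G \<in> top_of_set Lsa interior_of Lsa_coercive \<alpha>"
    by blast
qed

lemma interior_of_Lsa_coerciveE:
  fixes G :: "'a::real_inner \<Rightarrow>\<^sub>L ('a \<Rightarrow>\<^sub>L real)"
  assumes "G \<in> top_of_set Lsa interior_of Lsa_coercive \<alpha>"
  obtains \<epsilon> where "\<epsilon> > 0" "G \<in> Lsa_coercive (\<alpha> + \<epsilon>)"
proof -
  have G: "G \<in> Lsa"
    using assms interior_of_subset_topspace[of "top_of_set Lsa"] by auto
  have "openin (top_of_set Lsa) (top_of_set Lsa interior_of Lsa_coercive \<alpha>)"
    by (rule openin_interior_of)
  then obtain r where r: "r > 0" "ball G r \<inter> Lsa \<subseteq> top_of_set Lsa interior_of Lsa_coercive \<alpha>"
    using assms unfolding openin_contains_ball by blast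
  have "dist G (G - (r/2) *\<^sub>R riesz_map) \<le> r/2"
    using norm_riesz_map_le[where 'a='a] r by (simp add: dist_norm mult_left_le)
  moreover have "G - (r/2) *\<^sub>R riesz_map \<in> Lsa"
    using G by (rule diff_scaleR_riesz_map_in_Lsa)
  ultimately have "G - (r/2) *\<^sub>R riesz_map \<in> ball G r \<inter> Lsa"
    using r by simp
  then have "G - (r/2) *\<^sub>R riesz_map \<in> Lsa_coercive \<alpha>"
    using r interior_of_subset[of "top_of_set Lsa" "Lsa_coercive \<alpha>"] by blast
  then have "G \<in> Lsa_coercive (\<alpha> + r/2)"
    using diff_riesz_map_in_Lsa_coercive_iff[OF G] by blast
  with r(1) show ?thesis
    by (intro that[of "r/2"]) simp_all
qed

theorem lemma2p3:
  fixes \<alpha> :: real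
  assumes "\<alpha> > 0"
  shows "(top_of_set (Lsa :: ('a::{real_inner,complete_space} \<Rightarrow>\<^sub>L ('a \<Rightarrow>\<^sub>L real)) set))
           interior_of (Lsa_coercive \<alpha>)
         = (\<Union>\<epsilon>\<in>{\<epsilon>. \<epsilon> > 0}. Lsa_coercive (\<alpha> + \<epsilon>))"
proof (intro subset_antisym subsetI)
  fix G :: "'a \<Rightarrow>\<^sub>L ('a \<Rightarrow>\<^sub>L real)"
  assume "G \<in> top_of_set Lsa interior_of Lsa_coercive \<alpha>"
  then obtain \<epsilon> where "\<epsilon> > 0" "G \<in> Lsa_coercive (\<alpha> + \<epsilon>)"
    by (rule interior_of_Lsa_coerciveE)
  then show "G \<in> (\<Union>\<epsilon>\<in>{\<epsilon>. \<epsilon> > 0}. Lsa_coercive (\<alpha> + \<epsilon>))"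
    by blast
next
  fix G :: "'a \<Rightarrow>\<^sub>L ('a \<Rightarrow>\<^sub>L real)"
  assume "G \<in> (\<Union>\<epsilon>\<in>{\<epsilon>. \<epsilon> > 0}. Lsa_coercive (\<alpha> + \<epsilon>))"
  then obtain \<epsilon> where "\<epsilon> > 0" "G \<in> Lsa_coercive (\<alpha> + \<epsilon>)"
    by blast
  then show "G \<in> top_of_set Lsa interior_of Lsa_coercive \<alpha>"
    using Lsa_coercive_subset_interior_of by blast
qed

end
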